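(* Let $M$ be a closed manifold immersed in $(V,\omega)=(\mathbb{R}^{2d},\sum_i dx_i\wedge dy_i)$ satisfying condition (LL): for every $P\in V$ there exists a point $x\in M$ with $T_xM\not\subset (x-P)^\omega$. Let $L_1,L_2\subset V$ be affine Lagrangian subspaces in general position, and let $n\ge 2$. Then there exist at least two distinct non-degenerate $n$-link outer symplectic billiard trajectories connecting $L_1$ and $L_2$.
   Context: Points of $M$ are identified with their images in $V$ and $T_xM\subset V$ denotes the tangent space at $x$. For a vector $u\in V$, $u^\omega=\{\xi\in V:\omega(\xi,u)=0\}$ is the symplectic complement of $\mathbb{R}u$. For a point $Q$ of $M$, $T_Q^\omega M=\{\xi\in V:\omega(\xi,\zeta)=0\ \forall \zeta\in T_QM\}$. Two points $z,z'\in V$ are in outer symplectic billiard correspondence with respect to $M$ if $Q=\tfrac12(z+z')$ is a point of $M$ and $z'-z\in T^\omega_QM$. Two affine Lagrangian subspaces are in general position if they contain no parallel lines (their direction subspaces intersect only in $0$). An $n$-link outer symplectic billiard trajectory connecting $L_1$ and $L_2$ is a tuple $(z_1,\dots,z_{n+1})$ of points of $V$ with $z_1\in L_1$, $z_{n+1}\in L_2$, and $z_i,z_{i+1}$ in outer symplectic billiard correspondence for each $i=1,\dots,n$. It is degenerate if $z_{i-1}=z_{i+1}$ for some $i\in\{2,\dots,n\}$, and non-degenerate otherwise. *)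

theory Defs
  imports "HOL-Analysis.Analysis"
begin

fun Ck :: "nat \<Rightarrow> 'a::euclidean_space set \<Rightarrow> ('a \<Rightarrow> 'b::real_normed_vector) \<Rightarrow> bool" where
  "Ck 0 U g = continuous_on U g"
| "Ck (Suc k) U g = (g differentiable_on U \<and> continuous_on U g \<and>
      (\<forall>v. Ck k U (\<lambda>x. frechet_derivative g (at x) v)))"

definition smooth_on :: "'a::euclidean_space set \<Rightarrow> ('a \<Rightarrow> 'b::real_normed_vector) \<Rightarrow> bool" where
  "smooth_on U g \<longleftrightarrow> (\<forall>k. Ck k U g)"

definition local_param :: "'a::euclidean_space set \<Rightarrow> ('k::euclidean_space \<Rightarrow> 'a) \<Rightarrow> 'k set \<Rightarrow> bool" where
  "local_param S \<phi> W \<longleftrightarrow> open W \<and> smooth_on W \<phi> \<and>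
     (\<exists>U. open U \<and> \<phi> ` W = S \<inter> U \<and> inj_on \<phi> W \<and> continuous_on (S \<inter> U) (inv_into W \<phi>)) \<and>
     (\<forall>w\<in>W. inj (frechet_derivative \<phi> (at w)))"

definition closed_manifold :: "'k::euclidean_space itself \<Rightarrow> 'a::euclidean_space set \<Rightarrow> bool" where
  "closed_manifold (TYPE('k)) S \<longleftrightarrow> compact S \<and>
     (\<forall>p\<in>S. \<exists>(\<phi>::'k \<Rightarrow> 'a) W. local_param S \<phi> W \<and> p \<in> \<phi> ` W)"

definition immersion :: "'k::euclidean_space itself \<Rightarrow> 'a::euclidean_space set \<Rightarrow> ('a \<Rightarrow> 'v::euclidean_space) \<Rightarrow> bool" where
  "immersion (TYPE('k)) S f \<longleftrightarrow>
     (\<forall>(\<phi>::'k \<Rightarrow> 'a) W. local_param S \<phi> W \<longrightarrow>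
        smooth_on W (f \<circ> \<phi>) \<and> (\<forall>w\<in>W. inj (frechet_derivative (f \<circ> \<phi>) (at w))))"

definition tangent_space :: "'k::euclidean_space itself \<Rightarrow> 'a::euclidean_space set \<Rightarrow> ('a \<Rightarrow> 'v::euclidean_space) \<Rightarrow> 'a \<Rightarrow> 'v set" where
  "tangent_space (TYPE('k)) S f p =
     {v. \<exists>(\<phi>::'k \<Rightarrow> 'a) W w. local_param S \<phi> W \<and> w \<in> W \<and> \<phi> w = p \<and>
          v \<in> range (frechet_derivative (f \<circ> \<phi>) (at w))}"

type_synonym 'd sympl = "(real^'d) \<times> (real^'d)"

definition omega :: "'d::finite sympl \<Rightarrow> 'd sympl \<Rightarrow> real" where
  "omega u v = fst u \<bullet> snd v - snd u \<bullet> fst v"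

definition symp_compl :: "'d::finite sympl \<Rightarrow> 'd sympl set" where
  "symp_compl u = {\<xi>. omega \<xi> u = 0}"

definition symp_orth :: "'d::finite sympl set \<Rightarrow> 'd sympl set" where
  "symp_orth T = {\<xi>. \<forall>\<zeta>\<in>T. omega \<xi> \<zeta> = 0}"

definition affine_lagrangian :: "'d::finite sympl set \<Rightarrow> bool" where
  "affine_lagrangian L \<longleftrightarrow> (\<exists>a W. subspace W \<and> dim W = CARD('d) \<and>
      (\<forall>u\<in>W. \<forall>v\<in>W. omega u v = 0) \<and> L = (\<lambda>w. a + w) ` W)"

definition direction :: "'d::finite sympl set \<Rightarrow> 'd sympl set" where
  "direction L = {x - y | x y. x \<in> L \<and> y \<in> L}"

definition general_position :: "'d::finite sympl set \<Rightarrow> 'd sympl set \<Rightarrow> bool" where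
  "general_position L1 L2 \<longleftrightarrow> direction L1 \<inter> direction L2 = {0}"

definition cond_LL :: "'k::euclidean_space itself \<Rightarrow> 'a::euclidean_space set \<Rightarrow> ('a \<Rightarrow> 'd::finite sympl) \<Rightarrow> bool" where
  "cond_LL K S f \<longleftrightarrow> (\<forall>P. \<exists>x\<in>S. \<not> (tangent_space K S f x \<subseteq> symp_compl (f x - P)))"

definition osb_corr :: "'k::euclidean_space itself \<Rightarrow> 'a::euclidean_space set \<Rightarrow> ('a \<Rightarrow> 'd::finite sympl) \<Rightarrow> 'd sympl \<Rightarrow> 'd sympl \<Rightarrow> bool" where
  "osb_corr K S f z z' \<longleftrightarrow> (\<exists>Q\<in>S. f Q = (1/2) *\<^sub>R (z + z') \<and> z' - z \<in> symp_orth (tangent_space K S f Q))"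

text \<open>An n-link trajectory (z_1,...,z_{n+1}) is the list zs with zs!(i-1) = z_i.\<close>
definition osb_trajectory :: "'k::euclidean_space itself \<Rightarrow> 'a::euclidean_space set \<Rightarrow> ('a \<Rightarrow> 'd::finite sympl) \<Rightarrow> nat \<Rightarrow> 'd sympl set \<Rightarrow> 'd sympl set \<Rightarrow> 'd sympl list \<Rightarrow> bool" where
  "osb_trajectory K S f n L1 L2 zs \<longleftrightarrow> length zs = n + 1 \<and> zs ! 0 \<in> L1 \<and> zs ! n \<in> L2 \<and>
     (\<forall>i<n. osb_corr K S f (zs ! i) (zs ! (i + 1)))"

definition non_degenerate :: "nat \<Rightarrow> 'd::finite sympl list \<Rightarrow> bool" where
  "non_degenerate n zs \<longleftrightarrow> (\<forall>i. 1 \<le> i \<and> i + 1 \<le> n \<longrightarrow> zs ! (i - 1) \<noteq> zs ! (i + 1))"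

end

(*
  A configuration is a choice of n points p 0, ..., p (n - 1) of the manifold, the midpoints of
  the links. Since L1 and L2 are complementary Lagrangians, each configuration determines a
  unique polygon z 0, ..., z n with z 0 in L1, z n in L2 and z (i+1) the reflection of z i in
  p i. For fixed base points a1 in L1 and a2 in L2, half the symplectic area of the polygon
  a1, z 0, ..., z n, a2 is a continuous function on the compact configuration space whose
  variation in p k along the manifold is omega (z (k+1) - z k, .) up to a term quadratic in
  the variation. Hence at its maximum and at its minimum every link z i z (i+1) is
  symplectically orthogonal to the manifold at its midpoint: both are trajectories. At a
  degenerate extremum (p k = p (k+1)) the two midpoints can be moved together to any point of
  the manifold without changing the area, and the resulting extrema violate (LL). If maximum
  and minimum coincided, the area would be constant and every configuration, including the
  degenerate ones, would be extremal.
*)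
theory Submission
  imports Defs
begin

lemma omega_add_left [simp]: "omega (a + b) c = omega a c + omega b c"
  and omega_add_right [simp]: "omega c (a + b) = omega c a + omega c b"
  and omega_diff_left [simp]: "omega (a - b) c = omega a c - omega b c"
  and omega_diff_right [simp]: "omega c (a - b) = omega c a - omega c b"
  and omega_minus_left [simp]: "omega (- a) c = - omega a c"
  and omega_minus_right [simp]: "omega c (- a) = - omega c a"
  and omega_scaleR_left [simp]: "omega (r *\<^sub>R a) c = r * omega a c"
  and omega_scaleR_right [simp]: "omega c (r *\<^sub>R a) = r * omega c a"
  and omega_zero_left [simp]: "omega 0 c = 0"
  and omega_zero_right [simp]: "omega c 0 = 0"
  and omega_self [simp]: "omega a a = 0"
  by (simp_all add: omega_def inner_add_left inner_add_right inner_diff_left inner_diff_right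
      inner_commute algebra_simps)

lemma omega_antisym: "omega a b = - omega b a"
  by (simp add: omega_def inner_commute)

lemma omega_eq_0_commute: "omega a b = 0 \<longleftrightarrow> omega b a = 0"
  using omega_antisym[of a b] by linarith

lemma omega_sum_right: "omega c (sum g A) = (\<Sum>i\<in>A. omega c (g i))"
  by (induction A rule: infinite_finite_induct) auto

lemma bounded_bilinear_omega: "bounded_bilinear omega"
  unfolding bilinear_conv_bounded_bilinear[symmetric] bilinear_def
  by (intro conjI allI linearI) simp_all

lemma continuous_on_omega [continuous_intros]:
  "continuous_on A g1 \<Longrightarrow> continuous_on A g2 \<Longrightarrow> continuous_on A (\<lambda>x. omega (g1 x) (g2 x))"
  unfolding omega_def by (intro continuous_intros)

lemma direction_translation:
  assumes "subspace E"
  shows "direction ((\<lambda>w. a + w) ` E) = E"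
proof
  show "direction ((\<lambda>w. a + w) ` E) \<subseteq> E"
  proof
    fix x
    assume "x \<in> direction ((\<lambda>w. a + w) ` E)"
    then obtain u v where "x = (a + u) - (a + v)" "u \<in> E" "v \<in> E"
      unfolding direction_def by blast
    then show "x \<in> E"
      using subspace_diff[OF assms] by simp
  qed
  have "x = (a + x) - (a + 0)" for x
    by simp
  then show "E \<subseteq> direction ((\<lambda>w. a + w) ` E)"
    unfolding direction_def using subspace_0[OF assms] by blast
qed

lemma affine_lagrangianE:
  assumes "affine_lagrangian (L :: 'd::finite sympl set)"
  obtains a E where "subspace E" "dim E = CARD('d)" "\<And>u v. u \<in> E \<Longrightarrow> v \<in> E \<Longrightarrow> omega u v = 0"
    "L = (\<lambda>w. a + w) ` E" "direction L = E"
  using assms direction_translation unfolding affine_lagrangian_def by metis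

lemma complementary_subspaces_decompose:
  fixes E1 E2 :: "'a::euclidean_space set"
  assumes E1: "subspace E1" and E2: "subspace E2"
    and dim: "dim E1 + dim E2 = DIM('a)" and disjoint: "E1 \<inter> E2 = {0}"
  obtains e where "e \<in> E1" "x - e \<in> E2"
proof -
  let ?sums = "{x + y |x y. x \<in> E1 \<and> y \<in> E2}"
  have "dim ?sums = DIM('a)"
    using dim_sums_Int[OF E1 E2] dim disjoint by simp
  then have "span ?sums = UNIV"
    by (rule dim_eq_full[THEN iffD1])
  then have "x \<in> ?sums"
    using span_eq_iff[THEN iffD2, OF subspace_sums[OF E1 E2]] by simp
  then obtain y z where "x = y + z" "y \<in> E1" "z \<in> E2"
    by blast
  then show ?thesis
    using that[of y] by simp
qed

lemma complementary_subspaces_projection: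
  fixes E1 E2 :: "'a::euclidean_space set"
  assumes E1: "subspace E1" and E2: "subspace E2"
    and dim: "dim E1 + dim E2 = DIM('a)" and disjoint: "E1 \<inter> E2 = {0}"
  obtains P where "linear P" "\<And>x. P x \<in> E1" "\<And>x. x - P x \<in> E2"
proof -
  have unique: "e = e'" if "e \<in> E1" "x - e \<in> E2" "e' \<in> E1" "x - e' \<in> E2" for x e e'
  proof -
    have "e - e' \<in> E1"
      by (rule subspace_diff[OF E1 that(1,3)])
    moreover have "(x - e') - (x - e) \<in> E2"
      by (rule subspace_diff[OF E2 that(4,2)])
    ultimately have "e - e' \<in> E1 \<inter> E2"
      by simp
    then show ?thesis
      using disjoint by simp
  qed
  define P where "P x = (SOME e. e \<in> E1 \<and> x - e \<in> E2)" for x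
  have P: "P x \<in> E1" "x - P x \<in> E2" for x
    using someI_ex[of "\<lambda>e. e \<in> E1 \<and> x - e \<in> E2"]
      complementary_subspaces_decompose[OF assms, of x]
    unfolding P_def by blast+
  have "linear P"
  proof (rule linearI)
    fix x y
    have "P x + P y \<in> E1" "(x + y) - (P x + P y) \<in> E2"
      using P subspace_add[OF E1] subspace_add[OF E2, of "x - P x" "y - P y"]
      by (simp_all add: algebra_simps)
    then show "P (x + y) = P x + P y"
      using P unique by blast
  next
    fix c :: real and x
    have "c *\<^sub>R P x \<in> E1" "c *\<^sub>R x - c *\<^sub>R P x \<in> E2"
      using P subspace_scale[OF E1] subspace_scale[OF E2, of "x - P x" c]
      by (simp_all add: algebra_simps)
    then show "P (c *\<^sub>R x) = c *\<^sub>R P x"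
      using P unique by blast
  qed
  with P that show ?thesis
    by blast
qed

lemma translation_memI:
  fixes x a :: "'a::ab_group_add"
  shows "x - a \<in> E \<Longrightarrow> x \<in> (\<lambda>w. a + w) ` E"
  by (rule image_eqI[of _ _ "x - a"]) simp_all

section \<open>Chains of point reflections\<close>

primrec point_reflections :: "(nat \<Rightarrow> 'a::real_vector) \<Rightarrow> 'a \<Rightarrow> nat \<Rightarrow> 'a" where
  "point_reflections p u 0 = u"
| "point_reflections p u (Suc i) = 2 *\<^sub>R p i - point_reflections p u i"

lemma point_reflections_add:
  "point_reflections (\<lambda>j. p j + q j) (u + v) i = point_reflections p u i + point_reflections q v i"
  by (induction i) (simp_all add: algebra_simps)

lemma point_reflections_zero_centres: "point_reflections (\<lambda>_. 0) v i = (-1) ^ i *\<^sub>R v"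
  by (induction i) simp_all

lemma point_reflections_single_centre:
  "point_reflections (\<lambda>j. if j = k then h else 0) 0 i
     = (if k < i then (2 * (-1) ^ (i - Suc k)) *\<^sub>R h else 0)"
proof (induction i)
  case (Suc i)
  show ?case
  proof (cases "k < i")
    case True
    then have "Suc i - Suc k = Suc (i - Suc k)"
      by simp
    with True Suc.IH show ?thesis
      by simp
  next
    case False
    with Suc.IH show ?thesis
      by (auto simp: less_Suc_eq)
  qed
qed simp

lemma point_reflections_translate:
  "point_reflections p (u + v) i = point_reflections p u i + (-1) ^ i *\<^sub>R v"
  using point_reflections_add[of p "\<lambda>_. 0" u v i] by (simp add: point_reflections_zero_centres)

lemma point_reflections_update:
  "point_reflections (p(k := p k + h)) u i
     = point_reflections p u i + (if k < i then (2 * (-1) ^ (i - Suc k)) *\<^sub>R h else 0)"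
proof -
  have "p(k := p k + h) = (\<lambda>j. p j + (if j = k then h else 0))"
    by auto
  then show ?thesis
    using point_reflections_add[of p "\<lambda>j. if j = k then h else 0" u 0 i]
    by (simp add: point_reflections_single_centre)
qed

lemma point_reflections_shift:
  "point_reflections p u (m + j) = point_reflections (\<lambda>i. p (m + i)) (point_reflections p u m) j"
  by (induction j) simp_all

lemma point_reflections_alternating_sum:
  "2 *\<^sub>R (\<Sum>i<m. (-1) ^ i *\<^sub>R p i) = u - (-1) ^ m *\<^sub>R point_reflections p u m"
  by (induction m) (simp_all add: algebra_simps)

lemma point_reflections_alternating_sum_from:
  assumes "m \<le> n"
  shows "2 *\<^sub>R (\<Sum>i\<in>{m..<n}. (-1) ^ (i - m) *\<^sub>R p i)
           = point_reflections p u m - (-1) ^ (n - m) *\<^sub>R point_reflections p u n"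
proof -
  have "(\<Sum>i\<in>{m..<n}. (-1) ^ (i - m) *\<^sub>R p i) = (\<Sum>j<n - m. (-1) ^ j *\<^sub>R p (m + j))"
    by (simp add: sum.atLeastLessThan_shift_0 atLeast0LessThan)
  moreover have "point_reflections p u n = point_reflections p u (m + (n - m))"
    using assms by simp
  ultimately show ?thesis
    by (simp only: point_reflections_shift point_reflections_alternating_sum)
qed

lemma point_reflections_cong:
  "(\<And>j. j < i \<Longrightarrow> p j = q j) \<Longrightarrow> point_reflections p u i = point_reflections q u i"
  by (induction i) auto

definition extremal_on :: "'a set \<Rightarrow> ('a \<Rightarrow> real) \<Rightarrow> 'a \<Rightarrow> bool" where
  "extremal_on C F x \<longleftrightarrow> (\<forall>y\<in>C. F y \<le> F x) \<or> (\<forall>y\<in>C. F x \<le> F y)"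

lemma extremal_on_compose:
  assumes "extremal_on C F x" "h ` W \<subseteq> C" "F (h w) = F x"
  shows "extremal_on W (\<lambda>y. F (h y)) w"
  using assms unfolding extremal_on_def by (smt (verit) image_subset_iff)

lemma omega_derivative_zero_at_extremum:
  fixes g :: "'k::real_normed_vector \<Rightarrow> 'd::finite sympl" and F :: "'d sympl \<Rightarrow> real"
  assumes W: "open W" "w \<in> W" and g: "(g has_derivative D) (at w)" and Q: "linear Q"
    and extremum: "extremal_on W (\<lambda>y. F (g y)) w"
    and quadratic: "\<And>z. F z - F (g w) = omega (z - g w) X + c * omega (Q (z - g w)) (z - g w)"
  shows "omega (D v) X = 0"
proof -
  define e where "e y = g y - g w" for y
  have e: "(e has_derivative D) (at w)"
    unfolding e_def using has_derivative_diff[OF g has_derivative_const[of "g w"]] by simp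
  have "((\<lambda>y. omega (e y) X) has_derivative (\<lambda>v. omega (D v) X)) (at w)"
    using bounded_bilinear.FDERIV[OF bounded_bilinear_omega e has_derivative_const[of X]] by simp
  moreover have "((\<lambda>y. c * omega (Q (e y)) (e y)) has_derivative (\<lambda>v. c * 0)) (at w)"
  proof (rule has_derivative_mult_right)
    have "((\<lambda>y. Q (e y)) has_derivative (\<lambda>v. Q (D v))) (at w)"
      using Q e by (simp add: bounded_linear.has_derivative linear_conv_bounded_linear)
    from bounded_bilinear.FDERIV[OF bounded_bilinear_omega this e]
    show "((\<lambda>y. omega (Q (e y)) (e y)) has_derivative (\<lambda>v. 0)) (at w)"
      by (simp add: e_def linear_0[OF Q])
  qed
  ultimately have "((\<lambda>y. F (g y) - F (g w)) has_derivative (\<lambda>v. omega (D v) X + c * 0)) (at w)"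
    unfolding quadratic e_def by (rule has_derivative_add)
  moreover have "(\<forall>y\<in>W. F (g y) - F (g w) \<le> F (g w) - F (g w))
      \<or> (\<forall>y\<in>W. F (g w) - F (g w) \<le> F (g y) - F (g w))"
    using extremum unfolding extremal_on_def by auto
  ultimately have "(\<lambda>v. omega (D v) X + c * 0) = (\<lambda>v. 0)"
    using differential_zero_maxmin[OF W(2,1)] by blast
  then show ?thesis
    by (metis add.right_neutral mult_zero_right)
qed

lemma smooth_on_imp_continuous_on: "smooth_on W g \<Longrightarrow> continuous_on W g"
  unfolding smooth_on_def by (metis Ck.simps(1))

lemma smooth_on_has_derivative:
  assumes "smooth_on W g" "open W" "w \<in> W"
  shows "(g has_derivative frechet_derivative g (at w)) (at w)"
proof -
  have "g differentiable_on W"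
    using assms(1) unfolding smooth_on_def by (metis Ck.simps(2))
  then show ?thesis
    using assms(2,3) differentiable_on_eq_differentiable_at frechet_derivative_works by blast
qed

lemma local_param_continuous_within:
  assumes chart: "local_param S \<phi> W" and cont: "continuous_on W (f \<circ> \<phi>)" and x: "x \<in> \<phi> ` W"
  shows "continuous (at x within S) f"
proof -
  obtain U where U: "open U" "\<phi> ` W = S \<inter> U" "continuous_on (S \<inter> U) (inv_into W \<phi>)"
    using chart unfolding local_param_def by blast
  have "inv_into W \<phi> ` (S \<inter> U) \<subseteq> W"
    using U(2) by (metis image_subsetI inv_into_into)
  then have "continuous_on (S \<inter> U) (\<lambda>y. (f \<circ> \<phi>) (inv_into W \<phi> y))"
    by (rule continuous_on_compose2[OF cont U(3)])
  moreover have "(f \<circ> \<phi>) (inv_into W \<phi> y) = f y" if "y \<in> S \<inter> U" for y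
  proof -
    have "y \<in> \<phi> ` W"
      using that U(2) by blast
    then show ?thesis
      by (simp add: f_inv_into_f)
  qed
  ultimately have "continuous_on (S \<inter> U) f"
    by (metis (no_types, lifting) continuous_on_cong)
  moreover have "x \<in> S \<inter> U"
    using x U(2) by blast
  ultimately have "continuous (at x within S \<inter> U) f"
    using continuous_on_eq_continuous_within by blast
  moreover have "at x within S = at x within S \<inter> U"
    using \<open>x \<in> S \<inter> U\<close> U(1) by (intro at_within_nhd[of x U]) auto
  ultimately show ?thesis
    by simp
qed

lemma immersion_continuous_on:
  assumes "closed_manifold TYPE('k::euclidean_space) S" "immersion TYPE('k) S f"
  shows "continuous_on S f"
  unfolding continuous_on_eq_continuous_within
proof
  fix x
  assume "x \<in> S"
  then obtain \<phi> :: "'k \<Rightarrow> 'a" and W where chart: "local_param S \<phi> W" and "x \<in> \<phi> ` W"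
    using assms(1) unfolding closed_manifold_def by blast
  moreover have "continuous_on W (f \<circ> \<phi>)"
    using assms(2) chart unfolding immersion_def by (blast intro: smooth_on_imp_continuous_on)
  ultimately show "continuous (at x within S) f"
    using local_param_continuous_within by blast
qed

lemma continuous_on_coordinate [continuous_intros]: "continuous_on A (\<lambda>p. p i)"
  by (rule continuous_on_subset[OF continuous_on_product_coordinates]) simp

lemma continuous_on_point_reflections [continuous_intros]:
  fixes g :: "(nat \<Rightarrow> 'a::real_normed_vector) \<Rightarrow> 'a"
  shows "continuous_on A g \<Longrightarrow> continuous_on A (\<lambda>p. point_reflections p (g p) i)"
  by (induction i) (simp_all add: continuous_on_diff continuous_on_scaleR continuous_on_coordinate)

section \<open>The generating function\<close>

lemma minus_one_power_diff_Suc: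
  assumes "k < n"
  shows "(-1::real) ^ n * (-1) ^ (n - Suc k) = - ((-1) ^ k)"
proof -
  obtain d where "n = Suc k + d"
    using assms less_imp_Suc_add by blast
  then show ?thesis
    by (simp add: power_add flip: power_mult_distrib)
qed

locale lagrangian_ends =
  fixes n :: nat and E1 E2 :: "'d::finite sympl set" and a1 a2 :: "'d sympl"
    and P :: "'d sympl \<Rightarrow> 'd sympl"
  assumes subspace1: "subspace E1" and subspace2: "subspace E2"
    and isotropic1: "\<And>u v. u \<in> E1 \<Longrightarrow> v \<in> E1 \<Longrightarrow> omega u v = 0"
    and isotropic2: "\<And>u v. u \<in> E2 \<Longrightarrow> v \<in> E2 \<Longrightarrow> omega u v = 0"
    and linear_P: "linear P" and P_in: "\<And>x. P x \<in> E1" and P_complement: "\<And>x. x - P x \<in> E2"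
begin

text \<open>The start point is the unique point of a1 + E1 whose image under the n point
  reflections through p 0, ..., p (n - 1) lies in a2 + E2, and the action is half the
  symplectic area of the polygon a1, vertex p 0, ..., vertex p n, a2.\<close>
definition start :: "(nat \<Rightarrow> 'd sympl) \<Rightarrow> 'd sympl" where
  "start p = a1 - (-1) ^ n *\<^sub>R P (point_reflections p 0 n + (-1) ^ n *\<^sub>R a1 - a2)"

definition vertex :: "(nat \<Rightarrow> 'd sympl) \<Rightarrow> nat \<Rightarrow> 'd sympl" where
  "vertex p = point_reflections p (start p)"

definition action :: "(nat \<Rightarrow> 'd sympl) \<Rightarrow> real" where
  "action p = (\<Sum>i<n. omega (vertex p i) (p i)) + omega (vertex p n) a2 / 2 - omega (start p) a1 / 2"

lemma vertex_0 [simp]: "vertex p 0 = start p"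
  and vertex_Suc [simp]: "vertex p (Suc i) = 2 *\<^sub>R p i - vertex p i"
  by (simp_all add: vertex_def)

lemma centre_eq_midpoint: "p i = (1/2) *\<^sub>R (vertex p i + vertex p (Suc i))"
  by simp

lemma start_in_E1: "start p - a1 \<in> E1"
  unfolding start_def using P_in subspace1 by (simp add: subspace_neg subspace_scale)

lemma last_vertex_in_E2: "vertex p n - a2 \<in> E2"
proof -
  define d where "d = point_reflections p 0 n + (-1) ^ n *\<^sub>R a1 - a2"
  have "vertex p n = point_reflections p 0 n + (-1) ^ n *\<^sub>R start p"
    unfolding vertex_def using point_reflections_translate[of p 0 "start p" n] by simp
  then have "vertex p n - a2 = d - ((-1) ^ n * (-1) ^ n) *\<^sub>R P d"
    unfolding start_def d_def by (simp add: algebra_simps)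
  also have "\<dots> = d - P d"
    by (simp flip: power_mult_distrib)
  finally show ?thesis
    using P_complement by simp
qed

lemma start_update:
  assumes "k < n"
  shows "start (p(k := p k + h)) = start p + (2 * (-1) ^ k) *\<^sub>R P h"
proof -
  have "point_reflections (p(k := p k + h)) 0 n = point_reflections p 0 n + (2 * (-1) ^ (n - Suc k)) *\<^sub>R h"
    using point_reflections_update[of p k h 0 n] assms by simp
  then show ?thesis
    using minus_one_power_diff_Suc[OF assms]
    by (simp add: start_def linear_add[OF linear_P] linear_diff[OF linear_P]
        linear_scale[OF linear_P] algebra_simps)
qed

lemma vertex_update:
  "vertex (p(k := p k + h)) i = vertex p i + (-1) ^ i *\<^sub>R (start (p(k := p k + h)) - start p)
      + (if k < i then (2 * (-1) ^ (i - Suc k)) *\<^sub>R h else 0)"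
proof -
  let ?p' = "p(k := p k + h)"
  have "vertex ?p' i = point_reflections ?p' (start p + (start ?p' - start p)) i"
    by (simp add: vertex_def)
  also have "\<dots> = point_reflections ?p' (start p) i + (-1) ^ i *\<^sub>R (start ?p' - start p)"
    by (rule point_reflections_translate)
  finally show ?thesis
    unfolding point_reflections_update by (simp add: vertex_def)
qed

lemma omega_vertex_update:
  assumes "\<delta> = start (p(k := p k + h)) - start p"
  shows "omega (vertex (p(k := p k + h)) i) ((p(k := p k + h)) i)
    = omega (vertex p i) (p i) + (-1) ^ i * omega \<delta> (p i)
      + (if k < i then 2 * (-1) ^ (i - Suc k) * omega h (p i) else 0)
      + (if i = k then omega (vertex p i) h + (-1) ^ i * omega \<delta> h else 0)"
  unfolding vertex_update assms[symmetric] by (cases "i = k") (auto simp: algebra_simps)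

lemma sum_omega_vertex_update:
  fixes p :: "nat \<Rightarrow> 'd sympl" and h :: "'d sympl"
  assumes "k < n"
  defines "p' \<equiv> p(k := p k + h)"
  shows "2 * ((\<Sum>i<n. omega (vertex p' i) (p' i)) - (\<Sum>i<n. omega (vertex p i) (p i)))
    = omega (start p' - start p) (start p) - omega (vertex p' n - vertex p n) (vertex p n)
      + 2 * omega h (vertex p (Suc k) - vertex p k) + 2 * (-1) ^ k * omega (start p' - start p) h"
proof -
  define \<delta> where "\<delta> = start p' - start p"
  define t :: real where "t = (-1) ^ (n - Suc k)"
  define A where "A = (\<Sum>i<n. (-1) ^ i *\<^sub>R p i)"
  define B where "B = (\<Sum>i\<in>{Suc k..<n}. (-1) ^ (i - Suc k) *\<^sub>R p i)"
  have sum1: "(\<Sum>i<n. (-1) ^ i * omega \<delta> (p i)) = omega \<delta> A"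
    unfolding A_def omega_sum_right by simp
  have "(\<Sum>i<n. if k < i then 2 * (-1) ^ (i - Suc k) * omega h (p i) else 0)
      = (\<Sum>i\<in>{..<n} \<inter> {i. k < i}. 2 * (-1) ^ (i - Suc k) * omega h (p i))"
    by (simp add: sum.If_cases)
  also have "{..<n} \<inter> {i. k < i} = {Suc k..<n}"
    by auto
  finally have sum2: "(\<Sum>i<n. if k < i then 2 * (-1) ^ (i - Suc k) * omega h (p i) else 0) = 2 * omega h B"
    unfolding B_def omega_sum_right by (simp add: sum_distrib_left mult.assoc)
  have sum3: "(\<Sum>i<n. if i = k then omega (vertex p i) h + (-1) ^ i * omega \<delta> h else 0)
      = omega (vertex p k) h + (-1) ^ k * omega \<delta> h"
    using assms(1) by simp
  have A: "2 *\<^sub>R A = start p - (-1) ^ n *\<^sub>R vertex p n"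
    unfolding A_def vertex_def by (rule point_reflections_alternating_sum)
  have B: "2 *\<^sub>R B = vertex p (Suc k) - t *\<^sub>R vertex p n"
    unfolding B_def vertex_def t_def using assms(1)
    by (intro point_reflections_alternating_sum_from) simp
  have last: "vertex p' n - vertex p n = (-1) ^ n *\<^sub>R \<delta> + (2 * t) *\<^sub>R h"
    unfolding p'_def \<delta>_def t_def vertex_update using assms(1) by simp
  have "2 * omega \<delta> A = omega \<delta> (start p) - (-1) ^ n * omega \<delta> (vertex p n)"
    using arg_cong[OF A, of "omega \<delta>"] by simp
  moreover have "2 * omega h B = omega h (vertex p (Suc k)) - t * omega h (vertex p n)"
    using arg_cong[OF B, of "omega h"] by simp
  moreover have "omega (vertex p k) h = - omega h (vertex p k)"
    by (rule omega_antisym)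
  ultimately show ?thesis
    unfolding omega_vertex_update[OF \<delta>_def[unfolded p'_def], folded p'_def] sum.distrib sum1 sum2 sum3 last
      \<delta>_def[symmetric]
    by (simp add: algebra_simps)
qed

lemma action_update:
  assumes "k < n"
  shows "action (p(k := p k + h)) - action p
           = omega h (vertex p (Suc k) - vertex p k) + 2 * omega (P h) h"
proof -
  define p' where "p' = p(k := p k + h)"
  have "start p' - start p \<in> E1"
    using subspace_diff[OF subspace1 start_in_E1 start_in_E1, of p' p] by simp
  then have iso1: "omega (start p' - start p) (start p - a1) = 0"
    using isotropic1 start_in_E1 by blast
  have "vertex p' n - vertex p n \<in> E2"
    using subspace_diff[OF subspace2 last_vertex_in_E2 last_vertex_in_E2, of p' p] by simp
  then have iso2: "omega (vertex p' n - vertex p n) (vertex p n - a2) = 0"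
    using isotropic2 last_vertex_in_E2 by blast
  have "2 * (action p' - action p)
      = 2 * omega h (vertex p (Suc k) - vertex p k) + 2 * (-1) ^ k * omega (start p' - start p) h"
    using sum_omega_vertex_update[OF assms, of p h, folded p'_def] iso1 iso2
    by (simp add: action_def algebra_simps)
  then show ?thesis
    unfolding p'_def start_update[OF assms] by (simp add: flip: power_mult_distrib)
qed

lemma action_update_point:
  assumes "k < n"
  shows "action (p(k := z)) - action p
    = omega (z - p k) (vertex p (Suc k) - vertex p k) + 2 * omega (P (z - p k)) (z - p k)"
proof -
  have "p(k := z) = p(k := p k + (z - p k))"
    by simp
  then show ?thesis
    by (simp only: action_update[OF assms])
qed

lemma merge_equal_centres:
  assumes "Suc k < n" and "p k = p (Suc k)"
  shows "action (p(k := y, Suc k := y)) = action p"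
    and "vertex (p(k := y, Suc k := y)) k = vertex p k"
proof -
  define h where "h = y - p k"
  define p1 where "p1 = p(k := p k + h)"
  have p2: "p(k := y, Suc k := y) = p1(Suc k := p1 (Suc k) + h)"
    using assms(2) by (simp add: p1_def h_def)
  have start1: "start p1 = start p + (2 * (-1) ^ k) *\<^sub>R P h"
    unfolding p1_def using assms(1) by (intro start_update) simp
  have start2: "start (p(k := y, Suc k := y)) = start p"
    unfolding p2 start_update[OF assms(1)] start1 by simp
  have vertex1: "vertex p1 (Suc k) = vertex p (Suc k) + 2 *\<^sub>R (h - P h)"
    using vertex_update[of p k h "Suc k"] start1 unfolding p1_def by (simp add: algebra_simps)
  have "vertex p1 (Suc (Suc k)) = vertex p (Suc (Suc k)) - 2 *\<^sub>R (h - P h)"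
    using vertex_update[of p k h "Suc (Suc k)"] start1 unfolding p1_def by (simp add: algebra_simps)
  also have "vertex p (Suc (Suc k)) = vertex p k"
    using assms(2) by simp
  finally have vertex2: "vertex p1 (Suc (Suc k)) = vertex p k - 2 *\<^sub>R (h - P h)" .
  have "action p1 - action p = omega h (vertex p (Suc k) - vertex p k) + 2 * omega (P h) h"
    unfolding p1_def using assms(1) by (intro action_update) simp
  moreover have "action (p(k := y, Suc k := y)) - action p1
      = omega h (vertex p1 (Suc (Suc k)) - vertex p1 (Suc k)) + 2 * omega (P h) h"
    unfolding p2 by (rule action_update[OF assms(1)])
  moreover have "omega h (P h) = - omega (P h) h"
    by (rule omega_antisym)
  ultimately show "action (p(k := y, Suc k := y)) = action p"
    unfolding vertex1 vertex2 by (simp add: algebra_simps)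
  show "vertex (p(k := y, Suc k := y)) k = vertex p k"
    unfolding vertex_def start2 by (rule point_reflections_cong) simp
qed

text \<open>Configurations are padded with 0 beyond n, so that they form a compact subset of the
  product space nat \<Rightarrow> 'd sympl.\<close>
definition configurations :: "'d sympl set \<Rightarrow> (nat \<Rightarrow> 'd sympl) set" where
  "configurations K = PiE UNIV (\<lambda>i. if i < n then K else {0})"

lemma configurations_iff:
  "p \<in> configurations K \<longleftrightarrow> (\<forall>i<n. p i \<in> K) \<and> (\<forall>i\<ge>n. p i = 0)"
  unfolding configurations_def PiE_UNIV_domain Pi_iff
  by (auto simp: not_less[symmetric] split: if_splits)

lemma configurations_update:
  "p \<in> configurations K \<Longrightarrow> k < n \<Longrightarrow> z \<in> K \<Longrightarrow> p(k := z) \<in> configurations K"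
  unfolding configurations_iff by simp

lemma compact_configurations:
  assumes "compact K"
  shows "compact (configurations K)"
proof -
  have "compactin (product_topology (\<lambda>i. euclidean) UNIV) (configurations K)"
    unfolding configurations_def compactin_PiE using assms by auto
  then show ?thesis
    by (simp add: euclidean_product_topology)
qed

lemma continuous_on_start: "continuous_on A start"
proof -
  have "bounded_linear P"
    using linear_P by (simp add: linear_conv_bounded_linear)
  then show ?thesis
    unfolding start_def[abs_def]
    by (intro continuous_intros bounded_linear.continuous_on[OF \<open>bounded_linear P\<close>]
        continuous_on_point_reflections)
qed

lemma continuous_on_action: "continuous_on A action"
  unfolding action_def[abs_def] vertex_def
  by (intro continuous_intros continuous_on_point_reflections continuous_on_start) auto

definition vertex_list :: "(nat \<Rightarrow> 'd sympl) \<Rightarrow> 'd sympl list" where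
  "vertex_list p = map (vertex p) [0..<Suc n]"

lemma vertex_list_nth: "i \<le> n \<Longrightarrow> vertex_list p ! i = vertex p i"
  unfolding vertex_list_def by (simp del: upt_Suc add: nth_upt less_Suc_eq_le)

section \<open>Extremal configurations are trajectories\<close>

lemma extremal_edge_orthogonal:
  fixes S :: "'a::euclidean_space set" and f :: "'a \<Rightarrow> 'd sympl"
  assumes immersion: "immersion TYPE('k::euclidean_space) S f"
    and extremal: "extremal_on (configurations (f ` S)) action p"
    and p: "p \<in> configurations (f ` S)" and k: "k < n" and Q: "Q \<in> S" "f Q = p k"
  shows "vertex p (Suc k) - vertex p k \<in> symp_orth (tangent_space TYPE('k) S f Q)"
  unfolding symp_orth_def
proof (intro CollectI ballI)
  fix \<zeta>
  assume "\<zeta> \<in> tangent_space TYPE('k) S f Q"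
  then obtain \<phi> :: "'k \<Rightarrow> 'a" and W w v where chart: "local_param S \<phi> W" and w: "w \<in> W" "\<phi> w = Q"
    and \<zeta>: "\<zeta> = frechet_derivative (f \<circ> \<phi>) (at w) v"
    unfolding tangent_space_def by blast
  obtain U where W: "open W" "\<phi> ` W = S \<inter> U"
    using chart unfolding local_param_def by blast
  have derivative: "((f \<circ> \<phi>) has_derivative frechet_derivative (f \<circ> \<phi>) (at w)) (at w)"
    using immersion chart W(1) w(1) unfolding immersion_def by (blast intro: smooth_on_has_derivative)
  have centre: "(f \<circ> \<phi>) w = p k"
    using w(2) Q(2) by simp
  have "(\<lambda>y. p(k := (f \<circ> \<phi>) y)) ` W \<subseteq> configurations (f ` S)"
    using p k W(2) by (auto intro: configurations_update)
  then have extremal_chart: "extremal_on W (\<lambda>y. action (p(k := (f \<circ> \<phi>) y))) w"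
    using w(1) centre by (intro extremal_on_compose[OF extremal]) auto
  have quadratic: "action (p(k := z)) - action (p(k := (f \<circ> \<phi>) w))
      = omega (z - (f \<circ> \<phi>) w) (vertex p (Suc k) - vertex p k)
        + 2 * omega (P (z - (f \<circ> \<phi>) w)) (z - (f \<circ> \<phi>) w)" for z
    unfolding centre fun_upd_triv by (rule action_update_point[OF k])
  have "omega (frechet_derivative (f \<circ> \<phi>) (at w) v) (vertex p (Suc k) - vertex p k) = 0"
    by (rule omega_derivative_zero_at_extremum[OF W(1) w(1) derivative linear_P extremal_chart quadratic])
  then show "omega (vertex p (Suc k) - vertex p k) \<zeta> = 0"
    unfolding \<zeta> by (rule omega_eq_0_commute[THEN iffD1])
qed

lemma extremal_vertices_non_degenerate:
  fixes S :: "'a::euclidean_space set" and f :: "'a \<Rightarrow> 'd sympl"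
  assumes immersion: "immersion TYPE('k::euclidean_space) S f" and LL: "cond_LL TYPE('k) S f"
    and extremal: "extremal_on (configurations (f ` S)) action p"
    and p: "p \<in> configurations (f ` S)" and k: "Suc k < n"
  shows "vertex p k \<noteq> vertex p (Suc (Suc k))"
proof
  assume equal: "vertex p k = vertex p (Suc (Suc k))"
  have "vertex p (Suc (Suc k)) - vertex p k = 2 *\<^sub>R (p (Suc k) - p k)"
    by (simp add: algebra_simps)
  then have "2 *\<^sub>R (p (Suc k) - p k) = 0"
    by (metis equal diff_self)
  then have centres: "p k = p (Suc k)"
    by simp
  obtain x where x: "x \<in> S" and not_orthogonal: "\<not> tangent_space TYPE('k) S f x \<subseteq> symp_compl (f x - vertex p k)"
    using LL[unfolded cond_LL_def, rule_format, of "vertex p k"] by (elim bexE)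
  define q where "q = p(k := f x, Suc k := f x)"
  have "q \<in> configurations (f ` S)"
    unfolding q_def using p k x by (simp add: configurations_update)
  moreover have "extremal_on (configurations (f ` S)) action q"
    using extremal_on_compose[OF extremal, of id "configurations (f ` S)" q]
      merge_equal_centres(1)[OF k centres]
    by (simp add: q_def)
  moreover have edge: "vertex q (Suc k) - vertex q k = 2 *\<^sub>R (f x - vertex p k)"
    using merge_equal_centres(2)[OF k centres] by (simp add: q_def scaleR_diff_right scaleR_2)
  ultimately have orthogonal: "2 *\<^sub>R (f x - vertex p k) \<in> symp_orth (tangent_space TYPE('k) S f x)"
    unfolding edge[symmetric] using k x by (intro extremal_edge_orthogonal[OF immersion]) (auto simp: q_def)
  have "tangent_space TYPE('k) S f x \<subseteq> symp_compl (f x - vertex p k)"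
  proof
    fix \<zeta>
    assume "\<zeta> \<in> tangent_space TYPE('k) S f x"
    with orthogonal have "omega (2 *\<^sub>R (f x - vertex p k)) \<zeta> = 0"
      unfolding symp_orth_def mem_Collect_eq by (rule bspec)
    then have "omega (f x - vertex p k) \<zeta> = 0"
      by (simp only: omega_scaleR_left mult_eq_0_iff) simp
    then show "\<zeta> \<in> symp_compl (f x - vertex p k)"
      unfolding symp_compl_def mem_Collect_eq by (rule omega_eq_0_commute[THEN iffD1])
  qed
  with not_orthogonal show False
    by (rule notE)
qed

lemma extremal_configuration_trajectory:
  fixes S :: "'a::euclidean_space set" and f :: "'a \<Rightarrow> 'd sympl"
  assumes immersion: "immersion TYPE('k::euclidean_space) S f"
    and extremal: "extremal_on (configurations (f ` S)) action p"
    and p: "p \<in> configurations (f ` S)"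
  shows "osb_trajectory TYPE('k) S f n ((\<lambda>w. a1 + w) ` E1) ((\<lambda>w. a2 + w) ` E2) (vertex_list p)"
  unfolding osb_trajectory_def
proof (intro conjI allI impI)
  show "length (vertex_list p) = n + 1"
    by (simp add: vertex_list_def)
  have ends: "vertex_list p ! 0 = start p" "vertex_list p ! n = vertex p n"
    by (simp_all add: vertex_list_nth)
  show "vertex_list p ! 0 \<in> (\<lambda>w. a1 + w) ` E1"
    unfolding ends by (rule translation_memI[OF start_in_E1])
  show "vertex_list p ! n \<in> (\<lambda>w. a2 + w) ` E2"
    unfolding ends by (rule translation_memI[OF last_vertex_in_E2])
  fix i
  assume i: "i < n"
  then have "p i \<in> f ` S"
    using p unfolding configurations_iff by simp
  then obtain Q where Q: "Q \<in> S" "f Q = p i"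
    by (metis imageE)
  have "vertex p (Suc i) - vertex p i \<in> symp_orth (tangent_space TYPE('k) S f Q)"
    by (rule extremal_edge_orthogonal[OF immersion extremal p i Q])
  moreover have "f Q = (1/2) *\<^sub>R (vertex p i + vertex p (Suc i))"
    unfolding Q(2) by (rule centre_eq_midpoint)
  moreover have "vertex_list p ! i = vertex p i" "vertex_list p ! (i + 1) = vertex p (Suc i)"
    using i by (simp_all add: vertex_list_nth del: vertex_Suc)
  ultimately show "osb_corr TYPE('k) S f (vertex_list p ! i) (vertex_list p ! (i + 1))"
    unfolding osb_corr_def using Q(1) by (intro bexI[of _ Q] conjI) simp_all
qed

lemma extremal_configuration_non_degenerate:
  fixes S :: "'a::euclidean_space set" and f :: "'a \<Rightarrow> 'd sympl"
  assumes "immersion TYPE('k::euclidean_space) S f" "cond_LL TYPE('k) S f"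
    and "extremal_on (configurations (f ` S)) action p" "p \<in> configurations (f ` S)"
  shows "non_degenerate n (vertex_list p)"
  unfolding non_degenerate_def
proof (intro allI impI)
  fix i
  assume i: "1 \<le> i \<and> i + 1 \<le> n"
  define k where "k = i - 1"
  have k: "i = Suc k" "Suc k < n"
    using i by (simp_all add: k_def)
  then have "vertex_list p ! (i - 1) = vertex p k" "vertex_list p ! (i + 1) = vertex p (Suc (Suc k))"
    by (simp_all add: vertex_list_nth del: vertex_Suc)
  then show "vertex_list p ! (i - 1) \<noteq> vertex_list p ! (i + 1)"
    using extremal_vertices_non_degenerate[OF assms k(2)] by simp
qed

lemma vertex_list_inj_on: "inj_on vertex_list (configurations K)"
proof (rule inj_onI)
  fix p q
  assume p: "p \<in> configurations K" and q: "q \<in> configurations K"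
    and vertices: "vertex_list p = vertex_list q"
  show "p = q"
  proof
    fix i
    show "p i = q i"
    proof (cases "i < n")
      case True
      then have "vertex p j = vertex q j" if "j \<le> Suc i" for j
        using that vertices vertex_list_nth[of j p] vertex_list_nth[of j q] by simp
      then have "vertex p i = vertex q i" "vertex p (Suc i) = vertex q (Suc i)"
        by (simp_all del: vertex_Suc)
      then show ?thesis
        by simp
    next
      case False
      then show ?thesis
        using p q unfolding configurations_iff by simp
    qed
  qed
qed

lemma constant_configuration_not_extremal:
  fixes S :: "'a::euclidean_space set" and f :: "'a \<Rightarrow> 'd sympl"
  assumes "immersion TYPE('k::euclidean_space) S f" "cond_LL TYPE('k) S f"
    and "n \<ge> 2" and "x \<in> S"
  defines "q \<equiv> \<lambda>i. if i < n then f x else 0"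
  shows "q \<in> configurations (f ` S)" and "\<not> extremal_on (configurations (f ` S)) action q"
proof -
  show q: "q \<in> configurations (f ` S)"
    unfolding q_def configurations_iff using assms(4) by simp
  have "vertex q (Suc (Suc 0)) = vertex q 0"
    using assms(3) by (simp add: q_def)
  then show "\<not> extremal_on (configurations (f ` S)) action q"
    using extremal_vertices_non_degenerate[OF assms(1,2) _ q, of 0] assms(3) by auto
qed

lemma two_extremal_trajectories:
  fixes S :: "'a::euclidean_space set" and f :: "'a \<Rightarrow> 'd sympl"
  assumes manifold: "closed_manifold TYPE('k::euclidean_space) S"
    and immersion: "immersion TYPE('k) S f" and LL: "cond_LL TYPE('k) S f" and n: "n \<ge> 2"
  obtains p1 p2 where "vertex_list p1 \<noteq> vertex_list p2"
    "p1 \<in> configurations (f ` S)" "extremal_on (configurations (f ` S)) action p1"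
    "p2 \<in> configurations (f ` S)" "extremal_on (configurations (f ` S)) action p2"
proof -
  let ?C = "configurations (f ` S)"
  obtain x where x: "x \<in> S"
    using LL unfolding cond_LL_def by blast
  let ?q = "\<lambda>i. if i < n then f x else 0"
  have "compact (f ` S)"
    using manifold immersion_continuous_on[OF manifold immersion]
    unfolding closed_manifold_def by (blast intro: compact_continuous_image)
  then have "compact ?C"
    by (rule compact_configurations)
  moreover have "?C \<noteq> {}"
    using constant_configuration_not_extremal(1)[OF immersion LL n x] by blast
  ultimately obtain pmax pmin where pmax: "pmax \<in> ?C" "\<forall>p\<in>?C. action p \<le> action pmax"
    and pmin: "pmin \<in> ?C" "\<forall>p\<in>?C. action pmin \<le> action p"
    using continuous_attains_sup continuous_attains_inf continuous_on_action by metis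
  have "pmax \<noteq> pmin"
  proof
    assume "pmax = pmin"
    then have "action p \<le> action ?q" if "p \<in> ?C" for p
      using pmax(2) pmin(2) constant_configuration_not_extremal(1)[OF immersion LL n x] that
      by fastforce
    then have "extremal_on ?C action ?q"
      unfolding extremal_on_def by blast
    then show False
      using constant_configuration_not_extremal(2)[OF immersion LL n x] by blast
  qed
  then have "vertex_list pmax \<noteq> vertex_list pmin"
    using inj_onD[OF vertex_list_inj_on _ pmax(1) pmin(1)] by blast
  moreover have "extremal_on ?C action pmax" "extremal_on ?C action pmin"
    using pmax(2) pmin(2) unfolding extremal_on_def by simp_all
  ultimately show ?thesis
    using that pmax(1) pmin(1) by blast
qed

end

theorem mainTheorem2:
  fixes S :: "'a::euclidean_space set"
    and f :: "'a \<Rightarrow> 'd::finite sympl"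
    and L1 L2 :: "'d sympl set"
    and n :: nat
  assumes "closed_manifold TYPE('k::euclidean_space) S"
    and "immersion TYPE('k) S f"
    and "cond_LL TYPE('k) S f"
    and "affine_lagrangian L1" and "affine_lagrangian L2"
    and "general_position L1 L2"
    and "n \<ge> 2"
  shows "\<exists>zs1 zs2. zs1 \<noteq> zs2 \<and>
           osb_trajectory TYPE('k) S f n L1 L2 zs1 \<and> non_degenerate n zs1 \<and>
           osb_trajectory TYPE('k) S f n L1 L2 zs2 \<and> non_degenerate n zs2"
proof -
  obtain a1 E1 where E1: "subspace E1" "dim E1 = CARD('d)" "\<And>u v. u \<in> E1 \<Longrightarrow> v \<in> E1 \<Longrightarrow> omega u v = 0"
      "L1 = (\<lambda>w. a1 + w) ` E1" "direction L1 = E1"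
    by (rule affine_lagrangianE[OF assms(4)]) (rule that)
  obtain a2 E2 where E2: "subspace E2" "dim E2 = CARD('d)" "\<And>u v. u \<in> E2 \<Longrightarrow> v \<in> E2 \<Longrightarrow> omega u v = 0"
      "L2 = (\<lambda>w. a2 + w) ` E2" "direction L2 = E2"
    by (rule affine_lagrangianE[OF assms(5)]) (rule that)
  have "dim E1 + dim E2 = DIM('d sympl)" "E1 \<inter> E2 = {0}"
    using E1(2,5) E2(2,5) assms(6) unfolding general_position_def by simp_all
  then obtain P where P: "linear P" "\<And>x. P x \<in> E1" "\<And>x. x - P x \<in> E2"
    by (rule complementary_subspaces_projection[OF E1(1) E2(1)]) (rule that)
  interpret lagrangian_ends n E1 E2 a1 a2 P
    by (rule lagrangian_ends.intro[OF E1(1) E2(1) E1(3) E2(3) P])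
  obtain p1 p2 where "vertex_list p1 \<noteq> vertex_list p2"
    "p1 \<in> configurations (f ` S)" "extremal_on (configurations (f ` S)) action p1"
    "p2 \<in> configurations (f ` S)" "extremal_on (configurations (f ` S)) action p2"
    by (rule two_extremal_trajectories[OF assms(1-3,7)])
  then show ?thesis
    unfolding E1(4) E2(4)
    using extremal_configuration_trajectory[OF assms(2)] extremal_configuration_non_degenerate[OF assms(2,3)]
    by (intro exI[of _ "vertex_list p1"] exI[of _ "vertex_list p2"]) simp
qed

end
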